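(* Let $I$ be a finite index set and let $\mathcal{F}:=\bigcup_{i\in I}\{p_i,p_i'\}$ be a family of vectors in $\mathbb{R}^d$ such that: (i) there is a nonzero vector $c$ with $(p_i+p_i')/2=c$ for all $i\in I$; (ii) $\langle p_i,p_i'\rangle=0$ for all $i\in I$; (iii) there is a subset $J\subseteq I$ of odd cardinality with $\sum_{j\in J}p_j=|J|\,c$; (iv) all pairwise inner products of vectors in $\mathcal{F}$ are nonnegative. Then the Gram matrix $\mathrm{Gram}(\mathcal{F})$ is doubly nonnegative but not completely positive.
   Context: $\mathrm{Gram}(\mathcal{F})$ is the matrix indexed by the members of the family $\mathcal{F}$ (with the $2|I|$ vectors $p_i,p_i'$, $i\in I$, as indices) whose entries are the pairwise inner products. A real symmetric matrix is doubly nonnegative if it is positive semidefinite and entrywise nonnegative. An $N\times N$ matrix $X$ is completely positive if there exist $k\ge1$ and entrywise nonnegative vectors $a_1,\dots,a_N\in\mathbb{R}^k_+$ with $X_{ij}=\langle a_i,a_j\rangle$ for all $i,j$. *)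

theory Defs
  imports "HOL-Analysis.Analysis"
begin

text \<open>The family F: index (i, False) stands for p_i, index (i, True) for p_i'.
  The index set of the family is I \<times> UNIV (2|I| indices).\<close>
definition family :: "('i \<Rightarrow> 'v) \<Rightarrow> ('i \<Rightarrow> 'v) \<Rightarrow> 'i \<times> bool \<Rightarrow> 'v" where
  "family p p' = (\<lambda>(i, b). if b then p' i else p i)"

definition gram :: "('k \<Rightarrow> 'v::real_inner) \<Rightarrow> 'k \<Rightarrow> 'k \<Rightarrow> real" where
  "gram v = (\<lambda>a b. inner (v a) (v b))"

definition symmetric_on :: "'k set \<Rightarrow> ('k \<Rightarrow> 'k \<Rightarrow> real) \<Rightarrow> bool" where
  "symmetric_on S X \<longleftrightarrow> (\<forall>a\<in>S. \<forall>b\<in>S. X a b = X b a)"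

definition psd_on :: "'k set \<Rightarrow> ('k \<Rightarrow> 'k \<Rightarrow> real) \<Rightarrow> bool" where
  "psd_on S X \<longleftrightarrow> symmetric_on S X \<and>
     (\<forall>x :: 'k \<Rightarrow> real. 0 \<le> (\<Sum>a\<in>S. \<Sum>b\<in>S. x a * X a b * x b))"

definition doubly_nonnegative_on :: "'k set \<Rightarrow> ('k \<Rightarrow> 'k \<Rightarrow> real) \<Rightarrow> bool" where
  "doubly_nonnegative_on S X \<longleftrightarrow> psd_on S X \<and> (\<forall>a\<in>S. \<forall>b\<in>S. 0 \<le> X a b)"

definition completely_positive_on :: "'k set \<Rightarrow> ('k \<Rightarrow> 'k \<Rightarrow> real) \<Rightarrow> bool" where
  "completely_positive_on S X \<longleftrightarrow>
     (\<exists>k::nat. k \<ge> 1 \<and> (\<exists>a :: 'k \<Rightarrow> nat \<Rightarrow> real.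
        (\<forall>s\<in>S. \<forall>l<k. 0 \<le> a s l) \<and>
        (\<forall>s\<in>S. \<forall>t\<in>S. X s t = (\<Sum>l<k. a s l * a t l))))"

end

theory Submission imports Defs begin

text \<open>Suppose the Gram matrix had a nonnegative factorisation by vectors \<open>a\<^sub>s\<close>. Since the
  map \<open>v\<^sub>s \<mapsto> a\<^sub>s\<close> preserves inner products, it preserves every linear relation, so
  \<open>a\<^sub>i + a\<^sub>i' = w\<close> is independent of \<open>i\<close> and \<open>\<Sum>\<^sub>j\<^sub>\<in>\<^sub>J (a\<^sub>j - a\<^sub>j') = 0\<close>. Orthogonality of nonnegative
  vectors means disjoint supports, so in each coordinate \<open>l\<close> every difference
  \<open>a\<^sub>j l - a\<^sub>j' l\<close> is \<open>\<plusminus>w l\<close>; an odd number of such terms can only cancel if \<open>w l = 0\<close>.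
  Hence \<open>w = 0\<close>, contradicting \<open>\<parallel>w\<parallel> = \<parallel>p\<^sub>i + p\<^sub>i'\<parallel> = 2\<parallel>c\<parallel> > 0\<close>.\<close>

lemma quadratic_form_inner_eq:
  "(\<Sum>s\<in>T. \<Sum>t\<in>T. x s * inner (v s) (v t) * x t)
     = inner (\<Sum>s\<in>T. x s *\<^sub>R v s) (\<Sum>t\<in>T. x t *\<^sub>R v t)"
  by (simp add: inner_sum_left inner_sum_right sum_distrib_left ac_simps inner_commute)

lemma psd_on_gram: "psd_on S (gram v)"
  unfolding psd_on_def symmetric_on_def gram_def
  by (simp add: inner_commute quadratic_form_inner_eq)

lemma doubly_nonnegative_on_gram:
  assumes "\<forall>s\<in>S. \<forall>t\<in>S. 0 \<le> inner (v s) (v t)"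
  shows "doubly_nonnegative_on S (gram v)"
  using assms psd_on_gram by (simp add: doubly_nonnegative_on_def gram_def)

lemma realization_sum_squares_eq:
  fixes v :: "'k \<Rightarrow> 'v::real_inner" and k :: nat
  assumes "\<forall>s\<in>T. \<forall>t\<in>T. inner (v s) (v t) = (\<Sum>l<k. a s l * a t l)"
  shows "(\<Sum>l<k. (\<Sum>t\<in>T. x t * a t l)\<^sup>2) = inner (\<Sum>t\<in>T. x t *\<^sub>R v t) (\<Sum>t\<in>T. x t *\<^sub>R v t)"
proof -
  have "inner (\<Sum>t\<in>T. x t *\<^sub>R v t) (\<Sum>t\<in>T. x t *\<^sub>R v t)
      = (\<Sum>s\<in>T. \<Sum>t\<in>T. \<Sum>l<k. x s * a s l * (x t * a t l))"
    unfolding quadratic_form_inner_eq[symmetric] using assms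
    by (intro sum.cong refl) (simp add: sum_distrib_left ac_simps)
  also have "\<dots> = (\<Sum>l<k. \<Sum>s\<in>T. \<Sum>t\<in>T. x s * a s l * (x t * a t l))"
    by (simp add: sum.swap[of _ T "{..<k}"])
  also have "\<dots> = (\<Sum>l<k. (\<Sum>t\<in>T. x t * a t l)\<^sup>2)"
    by (simp add: power2_eq_square sum_product)
  finally show ?thesis by simp
qed

lemma realization_preserves_linear_relation:
  fixes v :: "'k \<Rightarrow> 'v::real_inner" and k :: nat
  assumes "\<forall>s\<in>T. \<forall>t\<in>T. inner (v s) (v t) = (\<Sum>l<k. a s l * a t l)"
    and "(\<Sum>t\<in>T. x t *\<^sub>R v t) = 0" and "l < k"
  shows "(\<Sum>t\<in>T. x t * a t l) = 0"
proof -
  have "(\<Sum>l<k. (\<Sum>t\<in>T. x t * a t l)\<^sup>2) = 0"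
    using realization_sum_squares_eq[OF assms(1)] assms(2) by simp
  then show ?thesis
    using assms(3) by (subst (asm) sum_nonneg_eq_0_iff) auto
qed

lemma odd_card_signed_sum_eq_zero_imp_zero:
  fixes x y :: "'j \<Rightarrow> real"
  assumes "odd (card J)"
    and "\<forall>j\<in>J. x j * y j = 0" and "\<forall>j\<in>J. x j + y j = w"
    and "(\<Sum>j\<in>J. x j - y j) = 0"
  shows "w = 0"
proof (rule ccontr)
  assume "w \<noteq> 0"
  have fin: "finite J" using assms(1) by (metis card.infinite odd_pos not_gr_zero)
  define Z where "Z = {j\<in>J. x j = 0}"
  have Z: "Z \<subseteq> J" "finite Z" using fin by (auto simp: Z_def)
  have "(\<Sum>j\<in>J. x j - y j) = (\<Sum>j\<in>J - Z. x j - y j) + (\<Sum>j\<in>Z. x j - y j)"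
    by (rule sum.subset_diff[OF Z(1) fin])
  also have "(\<Sum>j\<in>J - Z. x j - y j) = (\<Sum>j\<in>J - Z. w)"
    using assms(2,3) by (intro sum.cong refl) (fastforce simp: Z_def)
  also have "(\<Sum>j\<in>Z. x j - y j) = (\<Sum>j\<in>Z. - w)"
    using assms(3) by (intro sum.cong) (auto simp: Z_def)
  finally have "(real (card (J - Z)) - real (card Z)) * w = 0"
    using assms(4) by (simp add: left_diff_distrib)
  with \<open>w \<noteq> 0\<close> have "card (J - Z) = card Z" by simp
  moreover have "card J = card (J - Z) + card Z"
    using card_Diff_subset[OF Z(2,1)] card_mono[OF fin Z(1)] by simp
  ultimately show False using assms(1) by simp
qed

lemma not_completely_positive_on_gram_family:
  fixes p p' :: "'i \<Rightarrow> 'v::real_inner"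
  assumes "c \<noteq> 0"
    and mid: "\<forall>i\<in>I. p i + p' i = 2 *\<^sub>R c"
    and orth: "\<forall>i\<in>I. inner (p i) (p' i) = 0"
    and "J \<subseteq> I" and "odd (card J)" and bal: "(\<Sum>j\<in>J. p j) = (\<Sum>j\<in>J. p' j)"
  shows "\<not> completely_positive_on (I \<times> UNIV) (gram (family p p'))"
proof
  define v where "v = family p p'"
  have v_simps [simp]: "v (i, False) = p i" "v (i, True) = p' i" for i
    by (simp_all add: v_def family_def)
  assume "completely_positive_on (I \<times> UNIV) (gram (family p p'))"
  then obtain k :: nat and a :: "'i \<times> bool \<Rightarrow> nat \<Rightarrow> real" where nonneg: "\<forall>s\<in>I \<times> UNIV. \<forall>l<k. 0 \<le> a s l"
    and G: "\<forall>s\<in>I \<times> UNIV. \<forall>t\<in>I \<times> UNIV. inner (v s) (v t) = (\<Sum>l<k. a s l * a t l)"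
    unfolding completely_positive_on_def gram_def v_def by blast
  have G_on: "\<forall>s\<in>T. \<forall>t\<in>T. inner (v s) (v t) = (\<Sum>l<k. a s l * a t l)"
    if "T \<subseteq> I \<times> UNIV" for T
    using G that by blast
  from \<open>odd (card J)\<close> obtain j0 where "j0 \<in> J" by fastforce
  with \<open>J \<subseteq> I\<close> have "j0 \<in> I" by blast
  define w where "w l = a (j0, False) l + a (j0, True) l" for l

  have disjoint: "a (i, False) l * a (i, True) l = 0" if "i \<in> I" "l < k" for i l
  proof -
    have "(\<Sum>l<k. a (i, False) l * a (i, True) l) = 0"
      using G orth that by (metis SigmaI UNIV_I v_simps)
    moreover have "\<forall>l<k. 0 \<le> a (i, False) l * a (i, True) l"
      using nonneg that by simp
    ultimately show ?thesis
      using that by (subst (asm) sum_nonneg_eq_0_iff) auto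
  qed

  have same_sum: "a (i, False) l + a (i, True) l = w l" if "i \<in> I" "l < k" for i l
  proof (cases "i = j0")
    case False
    define x where "x = (\<lambda>(t, b::bool). if t = i then 1 else - 1 :: real)"
    have "{i, j0} \<times> UNIV \<subseteq> I \<times> UNIV" using that \<open>j0 \<in> I\<close> by blast
    moreover have "(\<Sum>t\<in>{i, j0} \<times> UNIV. x t *\<^sub>R v t) = (p i + p' i) - (p j0 + p' j0)"
      using False by (simp add: sum.cartesian_product' UNIV_bool x_def algebra_simps)
    ultimately have "(\<Sum>t\<in>{i, j0} \<times> UNIV. x t * a t l) = 0"
      using realization_preserves_linear_relation[OF G_on] mid that \<open>j0 \<in> I\<close> by simp
    then show ?thesis
      using False by (simp add: sum.cartesian_product' UNIV_bool x_def w_def algebra_simps)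
  qed (simp add: w_def)

  have balanced: "(\<Sum>j\<in>J. a (j, False) l - a (j, True) l) = 0" if "l < k" for l
  proof -
    define x where "x = (\<lambda>(_ :: 'i, b). if b then - 1 else 1 :: real)"
    have "J \<times> UNIV \<subseteq> I \<times> UNIV" using \<open>J \<subseteq> I\<close> by blast
    moreover have "(\<Sum>t\<in>J \<times> UNIV. x t *\<^sub>R v t) = 0"
      using bal by (simp add: sum.cartesian_product' UNIV_bool x_def sum_subtractf)
    ultimately have "(\<Sum>t\<in>J \<times> UNIV. x t * a t l) = 0"
      using realization_preserves_linear_relation[OF G_on] that by blast
    then show ?thesis
      by (simp add: sum.cartesian_product' UNIV_bool x_def sum_subtractf)
  qed

  have "w l = 0" if "l < k" for l
    using \<open>J \<subseteq> I\<close> disjoint same_sum that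
    by (intro odd_card_signed_sum_eq_zero_imp_zero[OF \<open>odd (card J)\<close> _ _ balanced]) auto
  moreover have "(\<Sum>l<k. (w l)\<^sup>2) = inner (2 *\<^sub>R c) (2 *\<^sub>R c)"
  proof -
    have "{j0} \<times> UNIV \<subseteq> I \<times> UNIV" using \<open>j0 \<in> I\<close> by blast
    from realization_sum_squares_eq[OF G_on[OF this], of "\<lambda>_. 1"]
    show ?thesis
      using mid \<open>j0 \<in> I\<close> by (simp add: sum.cartesian_product' UNIV_bool w_def add.commute)
  qed
  ultimately show False
    using \<open>c \<noteq> 0\<close> by simp
qed

theorem theorem4p10:
  fixes I :: "'i set" and p p' :: "'i \<Rightarrow> real ^ 'd" and c :: "real ^ 'd" and J :: "'i set"
  assumes "finite I"
    and "c \<noteq> 0"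
    and "\<forall>i\<in>I. (1/2) *\<^sub>R (p i + p' i) = c"
    and "\<forall>i\<in>I. inner (p i) (p' i) = 0"
    and "J \<subseteq> I" and "odd (card J)" and "(\<Sum>j\<in>J. p j) = real (card J) *\<^sub>R c"
    and "\<forall>a\<in>I \<times> UNIV. \<forall>b\<in>I \<times> UNIV. 0 \<le> inner (family p p' a) (family p p' b)"
  shows "doubly_nonnegative_on (I \<times> UNIV) (gram (family p p'))
       \<and> \<not> completely_positive_on (I \<times> UNIV) (gram (family p p'))"
proof
  show "doubly_nonnegative_on (I \<times> UNIV) (gram (family p p'))"
    using assms(8) by (rule doubly_nonnegative_on_gram)
  have mid: "\<forall>i\<in>I. p i + p' i = 2 *\<^sub>R c"
    using assms(3) by (metis scaleR_half_double scaleR_2 scaleR_right_distrib)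
  have "(\<Sum>j\<in>J. p' j) = (\<Sum>j\<in>J. 2 *\<^sub>R c - p j)"
    using mid assms(5) by (intro sum.cong) (auto simp: algebra_simps)
  also have "\<dots> = real (card J) *\<^sub>R (2 *\<^sub>R c) - real (card J) *\<^sub>R c"
    using assms(7) by (simp only: sum_subtractf sum_constant_scaleR)
  also have "\<dots> = (\<Sum>j\<in>J. p j)"
    using assms(7) by (simp add: scaleR_2 scaleR_right_distrib)
  finally show "\<not> completely_positive_on (I \<times> UNIV) (gram (family p p'))"
    using not_completely_positive_on_gram_family[OF assms(2) mid assms(4,5,6)] by simp
qed

end
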